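(* Let $(N,g)$ be a simply connected five-dimensional two-step nilpotent Lie group with a left-invariant Riemannian metric, with Lie algebra $\mathfrak{n}$ and orthonormal basis $e_1,\dots,e_5$ as in one of the three normal forms below, and let $\mathfrak{h}$ be the center of $\mathfrak{n}$. A left-invariant vector field $X\in\mathfrak{n}$ is harmonic if and only if: (a) $X\in\mathfrak{h}^\perp$, in the cases where $\dim\mathfrak{h}$ is $1$ or $2$ (Cases 1 and 2); (b) $\langle X,e_3\rangle=0$, in the case where $\dim\mathfrak{h}=3$ (Case 3).
   Context: A Lie algebra $\mathfrak{n}$ is two-step nilpotent if $[\mathfrak{n},\mathfrak{n}]\neq 0$ and $[\mathfrak{n},[\mathfrak{n},\mathfrak{n}]]=0$. Left-invariant vector fields are identified with elements of $\mathfrak{n}=T_eN$, and $g$ with an inner product $\langle\cdot,\cdot\rangle$ on $\mathfrak{n}$. Up to isometry, such $(\mathfrak{n},\langle\cdot,\cdot\rangle)$ admits an orthonormal basis $e_1,\dots,e_5$ with one of the following bracket structures (all brackets not listed being zero): (Case 1, center of dimension 1) $[e_1,e_2]=\lambda e_5$, $[e_3,e_4]=\mu e_5$ with $\lambda\ge\mu>0$; (Case 2, center of dimension 2) $[e_1,e_2]=\lambda e_4$, $[e_1,e_3]=\mu e_5$ with $\lambda\ge\mu>0$; (Case 3, center of dimension 3) $[e_1,e_2]=\lambda e_3$ with $\lambda>0$. A vector field $X$ is harmonic if its metric dual 1-form $X^\flat=g(X,\cdot)$ satisfies $\Delta X^\flat=0$, where $\Delta=d\circ\delta+\delta\circ d$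 is the Laplace–Beltrami operator on forms, $d$ is the exterior derivative and $\delta=-\mathrm{div}$ is the codifferential. *)

theory Defs
  imports "HOL-Analysis.Analysis" "HOL-Library.Numeral_Type"
begin

text \<open>The Lie algebra n is identified, via the orthonormal basis e_1,...,e_5,
 with real^5 carrying the standard (Euclidean) inner product.  Left-invariant
 vector fields are elements of n; left-invariant k-forms are k-linear
 (alternating) functions on n; left-invariant functions are constants.\<close>

type_synonym lalg = "real^5"

definition e :: "nat \<Rightarrow> lalg" where
  "e i = axis (of_nat i :: 5) 1"

text \<open>Levi-Civita connection on left-invariant fields (Koszul formula).\<close>
definition nabla :: "(lalg \<Rightarrow> lalg \<Rightarrow> lalg) \<Rightarrow> lalg \<Rightarrow> lalg \<Rightarrow> lalg" where
  "nabla br X Y = (\<Sum>k\<in>{1..5}. ((1/2) * (br X Y \<bullet> e k - br Y (e k) \<bullet> X + br (e k) X \<bullet> Y)) *\<^sub>R e k)"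

text \<open>Exterior derivative of a left-invariant function (a constant): zero.\<close>
definition d0 :: "real \<Rightarrow> lalg \<Rightarrow> real" where
  "d0 c = (\<lambda>Y. 0)"

text \<open>Exterior derivative of a left-invariant 1-form:
  d theta (Y,Z) = Y(theta Z) - Z(theta Y) - theta [Y,Z] = - theta [Y,Z].\<close>
definition d1 :: "(lalg \<Rightarrow> lalg \<Rightarrow> lalg) \<Rightarrow> (lalg \<Rightarrow> real) \<Rightarrow> lalg \<Rightarrow> lalg \<Rightarrow> real" where
  "d1 br \<theta> Y Z = - \<theta> (br Y Z)"

text \<open>Covariant derivatives of left-invariant forms (the derivative of the
 constant function theta(A), resp. omega(A,B), vanishes).\<close>
definition cov1 :: "(lalg \<Rightarrow> lalg \<Rightarrow> lalg) \<Rightarrow> lalg \<Rightarrow> (lalg \<Rightarrow> real) \<Rightarrow> lalg \<Rightarrow> real" where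
  "cov1 br X \<theta> A = - \<theta> (nabla br X A)"

definition cov2 :: "(lalg \<Rightarrow> lalg \<Rightarrow> lalg) \<Rightarrow> lalg \<Rightarrow> (lalg \<Rightarrow> lalg \<Rightarrow> real) \<Rightarrow> lalg \<Rightarrow> lalg \<Rightarrow> real" where
  "cov2 br X \<omega> A B = - \<omega> (nabla br X A) B - \<omega> A (nabla br X B)"

text \<open>Codifferential (delta = - div) on left-invariant 1-forms and 2-forms.\<close>
definition delta1 :: "(lalg \<Rightarrow> lalg \<Rightarrow> lalg) \<Rightarrow> (lalg \<Rightarrow> real) \<Rightarrow> real" where
  "delta1 br \<theta> = - (\<Sum>i\<in>{1..5}. cov1 br (e i) \<theta> (e i))"

definition delta2 :: "(lalg \<Rightarrow> lalg \<Rightarrow> lalg) \<Rightarrow> (lalg \<Rightarrow> lalg \<Rightarrow> real) \<Rightarrow> lalg \<Rightarrow> real" where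
  "delta2 br \<omega> Y = - (\<Sum>i\<in>{1..5}. cov2 br (e i) \<omega> (e i) Y)"

definition laplace1 :: "(lalg \<Rightarrow> lalg \<Rightarrow> lalg) \<Rightarrow> (lalg \<Rightarrow> real) \<Rightarrow> lalg \<Rightarrow> real" where
  "laplace1 br \<theta> = (\<lambda>Y. d0 (delta1 br \<theta>) Y + delta2 br (d1 br \<theta>) Y)"

definition flat :: "lalg \<Rightarrow> lalg \<Rightarrow> real" where
  "flat X = (\<lambda>Y. X \<bullet> Y)"

definition harmonic :: "(lalg \<Rightarrow> lalg \<Rightarrow> lalg) \<Rightarrow> lalg \<Rightarrow> bool" where
  "harmonic br X \<longleftrightarrow> laplace1 br (flat X) = (\<lambda>Y. 0)"

definition center :: "(lalg \<Rightarrow> lalg \<Rightarrow> lalg) \<Rightarrow> lalg set" where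
  "center br = {Z. \<forall>Y. br Z Y = 0}"

definition orth_compl :: "lalg set \<Rightarrow> lalg set" where
  "orth_compl S = {X. \<forall>Z\<in>S. X \<bullet> Z = 0}"

definition br1 :: "real \<Rightarrow> real \<Rightarrow> lalg \<Rightarrow> lalg \<Rightarrow> lalg" where
  "br1 lam mu X Y =
     (lam * ((X \<bullet> e 1) * (Y \<bullet> e 2) - (X \<bullet> e 2) * (Y \<bullet> e 1))
      + mu * ((X \<bullet> e 3) * (Y \<bullet> e 4) - (X \<bullet> e 4) * (Y \<bullet> e 3))) *\<^sub>R e 5"

definition br2 :: "real \<Rightarrow> real \<Rightarrow> lalg \<Rightarrow> lalg \<Rightarrow> lalg" where
  "br2 lam mu X Y =
     (lam * ((X \<bullet> e 1) * (Y \<bullet> e 2) - (X \<bullet> e 2) * (Y \<bullet> e 1))) *\<^sub>R e 4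
      + (mu * ((X \<bullet> e 1) * (Y \<bullet> e 3) - (X \<bullet> e 3) * (Y \<bullet> e 1))) *\<^sub>R e 5"

definition br3 :: "real \<Rightarrow> lalg \<Rightarrow> lalg \<Rightarrow> lalg" where
  "br3 lam X Y =
     (lam * ((X \<bullet> e 1) * (Y \<bullet> e 2) - (X \<bullet> e 2) * (Y \<bullet> e 1))) *\<^sub>R e 3"

end

theory Submission
  imports Defs
begin

text \<open>For left-invariant X, the 2-form d X^flat is (A, B) \<mapsto> -<X, [A, B]>, and its
  codifferential, expanded with the Koszul formula, collapses to
  Delta X^flat (Y) = 1/2 \<Sum>_{i,k} <X, [e_i, e_k]> <Y, [e_i, e_k]>:
  the remaining Koszul terms are double brackets, which vanish in a two-step nilpotent
  algebra, or traces of ad, which vanish by unimodularity. Taking Y = X shows that X is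
  harmonic iff X is orthogonal to the derived algebra [n, n]. In the three normal forms
  [n, n] is spanned by e_5, by e_4 and e_5, and by e_3, respectively; in the first
  two cases it coincides with the center.\<close>

lemma sum_1_5: "(\<Sum>k\<in>{1..5::nat}. f k) = f 1 + f 2 + f 3 + f 4 + f 5"
  by (simp add: eval_nat_numeral)

lemma UNIV_5: "(UNIV :: 5 set) = {0, 1, 2, 3, 4}"
  by (rule sym, rule card_subset_eq) simp_all

lemma Basis_lalg: "(Basis :: lalg set) = e ` {1..5}"
proof -
  have five_eq_0: "(5 :: 5) = 0"
    by simp
  have "{1..5::nat} = {5, 1, 2, 3, 4}"
    by auto
  then have of_nat_onto: "(of_nat ` {1..5} :: 5 set) = UNIV"
    by (simp add: UNIV_5 five_eq_0)
  have "(Basis :: lalg set) = range (\<lambda>i. axis i 1)"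
    by (auto simp: Basis_vec_def)
  also have "\<dots> = e ` {1..5}"
    by (simp add: e_def image_image flip: of_nat_onto)
  finally show ?thesis .
qed

lemma inner_e_e:
  assumes "i \<in> {1..5}" "j \<in> {1..5}"
  shows "e i \<bullet> e j = (if i = j then 1 else 0)"
  using assms unfolding e_def
  by (auto simp: inner_axis_axis numeral_eq_Suc le_Suc_eq)

lemma e_nonzero: "i \<in> {1..5} \<Longrightarrow> e i \<noteq> 0"
  using inner_e_e[of i i] by auto

lemma inj_on_e: "inj_on e {1..5}"
  by (rule inj_onI) (metis inner_e_e one_neq_zero)

lemma sum_Basis_lalg: "(\<Sum>b\<in>Basis. f b) = (\<Sum>k\<in>{1..5}. f (e k :: lalg))"
  unfolding Basis_lalg sum.reindex[OF inj_on_e] by simp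

lemma lalg_expansion: "(\<Sum>k\<in>{1..5}. (v \<bullet> e k) *\<^sub>R e k) = v"
  using euclidean_representation[of v] by (simp add: sum_Basis_lalg)

lemma inner_lalg_expansion: "v \<bullet> w = (\<Sum>k\<in>{1..5}. (v \<bullet> e k) * (w \<bullet> e k))"
  using euclidean_inner[of v w] by (simp add: sum_Basis_lalg)

lemma inner_sum_e:
  assumes "j \<in> {1..5}"
  shows "(\<Sum>k\<in>{1..5}. c k *\<^sub>R e k) \<bullet> e j = c j"
  using assms by (simp add: inner_sum_left inner_e_e if_distrib cong: if_cong)

lemma inner_nabla_e:
  assumes "k \<in> {1..5}"
  shows "nabla br A B \<bullet> e k = (1/2) * (br A B \<bullet> e k - br B (e k) \<bullet> A + br (e k) A \<bullet> B)"
  unfolding nabla_def using assms by (rule inner_sum_e)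

definition commutators :: "(lalg \<Rightarrow> lalg \<Rightarrow> lalg) \<Rightarrow> lalg set" where
  "commutators br = {br A B | A B. True}"

text \<open>Nilpotent Lie algebras are unimodular (ad Z is nilpotent, hence trace-free);
  this is assumed here and checked directly for the normal forms.\<close>

locale two_step_nilpotent =
  fixes br :: "lalg \<Rightarrow> lalg \<Rightarrow> lalg"
  assumes bilinear: "bilinear br"
    and antisym: "br A B = - br B A"
    and br_br: "br (br A B) C = 0"
    and unimodular: "(\<Sum>i\<in>{1..5}. br Z (e i) \<bullet> e i) = 0"
begin

lemma br_self: "br A A = 0"
  using antisym[of A A] by (simp add: eq_neg_iff_add_eq_0 flip: scaleR_2)

lemma inner_br_expand_left: "X \<bullet> br A B = (\<Sum>k\<in>{1..5}. (A \<bullet> e k) * (X \<bullet> br (e k) B))"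
proof -
  have lin: "linear (\<lambda>A. br A B)"
    using bilinear by (simp add: bilinear_def)
  have "br A B = (\<Sum>k\<in>{1..5}. (A \<bullet> e k) *\<^sub>R br (e k) B)"
    by (subst (1) lalg_expansion[of A, symmetric])
      (simp add: linear_sum[OF lin] linear_scale[OF lin] o_def)
  then show ?thesis
    by (simp add: inner_sum_right)
qed

lemma inner_br_expand_right: "X \<bullet> br A B = (\<Sum>k\<in>{1..5}. (B \<bullet> e k) * (X \<bullet> br A (e k)))"
proof -
  have lin: "linear (br A)"
    using bilinear by (simp add: bilinear_def)
  have "br A B = (\<Sum>k\<in>{1..5}. (B \<bullet> e k) *\<^sub>R br A (e k))"
    by (subst (1) lalg_expansion[of B, symmetric])
      (simp add: linear_sum[OF lin] linear_scale[OF lin] o_def)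
  then show ?thesis
    by (simp add: inner_sum_right)
qed

lemma laplace1_flat_unfold:
  "laplace1 br (flat X) Y =
     - (\<Sum>i\<in>{1..5}. X \<bullet> br (nabla br (e i) (e i)) Y)
     - (\<Sum>i\<in>{1..5}. X \<bullet> br (e i) (nabla br (e i) Y))"
  unfolding laplace1_def d0_def delta2_def cov2_def d1_def flat_def
  by (simp add: sum.distrib sum_negf)

lemma sum_inner_br_nabla_diag: "(\<Sum>i\<in>{1..5}. X \<bullet> br (nabla br (e i) (e i)) Y) = 0"
proof -
  have "(\<Sum>i\<in>{1..5}. X \<bullet> br (nabla br (e i) (e i)) Y)
      = (\<Sum>i\<in>{1..5}. \<Sum>k\<in>{1..5}. (br (e k) (e i) \<bullet> e i) * (X \<bullet> br (e k) Y))"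
  proof (intro sum.cong refl)
    fix i :: nat assume "i \<in> {1..5}"
    have "nabla br (e i) (e i) \<bullet> e k = br (e k) (e i) \<bullet> e i" if "k \<in> {1..5}" for k
      using that antisym[of "e i" "e k"] by (simp add: inner_nabla_e br_self)
    then show "X \<bullet> br (nabla br (e i) (e i)) Y
        = (\<Sum>k\<in>{1..5}. (br (e k) (e i) \<bullet> e i) * (X \<bullet> br (e k) Y))"
      by (simp add: inner_br_expand_left[of X "nabla br _ _"])
  qed
  txt \<open>The inner sums are the traces of ad (e_k).\<close>
  also have "\<dots> = (\<Sum>k\<in>{1..5}. (\<Sum>i\<in>{1..5}. br (e k) (e i) \<bullet> e i) * (X \<bullet> br (e k) Y))"
    by (subst sum.swap) (simp add: sum_distrib_right)
  also have "\<dots> = 0"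
    by (simp only: unimodular mult_zero_left sum.neutral_const)
  finally show ?thesis .
qed

lemma sum_inner_br_nabla:
  "(\<Sum>i\<in>{1..5}. X \<bullet> br (e i) (nabla br (e i) Y))
     = - (1/2) * (\<Sum>i\<in>{1..5}. \<Sum>k\<in>{1..5}. (X \<bullet> br (e i) (e k)) * (Y \<bullet> br (e i) (e k)))"
proof -
  have nabla_coord: "nabla br (e i) Y \<bullet> e k
      = (1/2) * (br (e i) Y \<bullet> e k) - (1/2) * (br Y (e k) \<bullet> e i) - (1/2) * (Y \<bullet> br (e i) (e k))"
    if "k \<in> {1..5}" for i k
    using antisym[of "e k" "e i"]
    by (simp add: inner_nabla_e[OF that] inner_commute[of Y] algebra_simps)
  txt \<open>The first two Koszul terms contract to X . [e_i, [e_i, Y]] and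
    X . [[Y, e_k], e_k], double brackets.\<close>
  have first: "(\<Sum>k\<in>{1..5}. (br (e i) Y \<bullet> e k) * (X \<bullet> br (e i) (e k))) = 0" for i
    using inner_br_expand_right[of X "e i" "br (e i) Y"] antisym[of "e i" "br (e i) Y"]
    by (simp add: br_br)
  have second: "(\<Sum>i\<in>{1..5}. \<Sum>k\<in>{1..5}. (br Y (e k) \<bullet> e i) * (X \<bullet> br (e i) (e k))) = 0"
  proof -
    have "(\<Sum>i\<in>{1..5}. (br Y (e k) \<bullet> e i) * (X \<bullet> br (e i) (e k))) = 0" for k
      using inner_br_expand_left[of X "br Y (e k)" "e k"] by (simp add: br_br)
    then show ?thesis
      by (subst sum.swap) simp
  qed
  have "(\<Sum>i\<in>{1..5}. X \<bullet> br (e i) (nabla br (e i) Y))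
      = (\<Sum>i\<in>{1..5}. \<Sum>k\<in>{1..5}. (nabla br (e i) Y \<bullet> e k) * (X \<bullet> br (e i) (e k)))"
    by (simp add: inner_br_expand_right[of X "e _" "nabla br _ _"])
  also have "\<dots> = (1/2) * (\<Sum>i\<in>{1..5}. \<Sum>k\<in>{1..5}. (br (e i) Y \<bullet> e k) * (X \<bullet> br (e i) (e k)))
      - (1/2) * (\<Sum>i\<in>{1..5}. \<Sum>k\<in>{1..5}. (br Y (e k) \<bullet> e i) * (X \<bullet> br (e i) (e k)))
      - (1/2) * (\<Sum>i\<in>{1..5}. \<Sum>k\<in>{1..5}. (Y \<bullet> br (e i) (e k)) * (X \<bullet> br (e i) (e k)))"
    by (simp add: nabla_coord left_diff_distrib sum_subtractf sum_distrib_left mult.assoc)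
  also have "\<dots> = - (1/2) * (\<Sum>i\<in>{1..5}. \<Sum>k\<in>{1..5}. (Y \<bullet> br (e i) (e k)) * (X \<bullet> br (e i) (e k)))"
    unfolding first second by simp
  also have "\<dots> = - (1/2) * (\<Sum>i\<in>{1..5}. \<Sum>k\<in>{1..5}. (X \<bullet> br (e i) (e k)) * (Y \<bullet> br (e i) (e k)))"
    by (simp add: mult.commute)
  finally show ?thesis .
qed

lemma laplace1_flat:
  "laplace1 br (flat X) Y
     = (1/2) * (\<Sum>i\<in>{1..5}. \<Sum>k\<in>{1..5}. (X \<bullet> br (e i) (e k)) * (Y \<bullet> br (e i) (e k)))"
  unfolding laplace1_flat_unfold sum_inner_br_nabla_diag sum_inner_br_nabla by simp

lemma orth_compl_commutators_iff:
  "X \<in> orth_compl (commutators br) \<longleftrightarrow> (\<forall>i\<in>{1..5}. \<forall>k\<in>{1..5}. X \<bullet> br (e i) (e k) = 0)"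
proof
  assume "\<forall>i\<in>{1..5}. \<forall>k\<in>{1..5}. X \<bullet> br (e i) (e k) = 0"
  then have "X \<bullet> br A B = 0" for A B
    by (simp add: inner_br_expand_left[of X A B] inner_br_expand_right[of X "e _" B])
  then show "X \<in> orth_compl (commutators br)"
    by (auto simp: orth_compl_def commutators_def)
qed (auto simp: orth_compl_def commutators_def)

theorem harmonic_iff_orth_compl_commutators:
  "harmonic br X \<longleftrightarrow> X \<in> orth_compl (commutators br)"
proof
  assume "harmonic br X"
  then have "laplace1 br (flat X) X = 0"
    by (simp add: harmonic_def)
  then have "(\<Sum>i\<in>{1..5}. \<Sum>k\<in>{1..5}. (X \<bullet> br (e i) (e k))\<^sup>2) = 0"
    by (simp add: laplace1_flat power2_eq_square)
  then have "\<forall>i\<in>{1..5}. \<forall>k\<in>{1..5}. X \<bullet> br (e i) (e k) = 0"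
    by (simp add: sum_nonneg_eq_0_iff sum_nonneg)
  then show "X \<in> orth_compl (commutators br)"
    by (simp add: orth_compl_commutators_iff)
next
  assume "X \<in> orth_compl (commutators br)"
  then show "harmonic br X"
    by (simp add: orth_compl_commutators_iff harmonic_def laplace1_flat fun_eq_iff)
qed

end

interpretation br1: two_step_nilpotent "br1 lam mu" for lam mu
proof
  show "bilinear (br1 lam mu)"
    unfolding bilinear_def linear_iff br1_def
    by (simp add: inner_add_left inner_scaleR_left algebra_simps)
  show "br1 lam mu A B = - br1 lam mu B A" for A B
    unfolding br1_def by (simp add: algebra_simps flip: scaleR_minus_left)
  show "br1 lam mu (br1 lam mu A B) C = 0" for A B C
    by (simp add: br1_def inner_e_e)
  show "(\<Sum>i\<in>{1..5}. br1 lam mu Z (e i) \<bullet> e i) = 0" for Z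
    by (simp add: br1_def inner_e_e eval_nat_numeral)
qed

interpretation br2: two_step_nilpotent "br2 lam mu" for lam mu
proof
  show "bilinear (br2 lam mu)"
    unfolding bilinear_def linear_iff br2_def
    by (simp add: inner_add_left inner_scaleR_left algebra_simps)
  show "br2 lam mu A B = - br2 lam mu B A" for A B
    unfolding br2_def by (simp add: algebra_simps flip: scaleR_minus_left)
  show "br2 lam mu (br2 lam mu A B) C = 0" for A B C
    by (simp add: br2_def inner_e_e inner_add_left)
  show "(\<Sum>i\<in>{1..5}. br2 lam mu Z (e i) \<bullet> e i) = 0" for Z
    by (simp add: br2_def inner_e_e inner_add_left eval_nat_numeral)
qed

interpretation br3: two_step_nilpotent "br3 lam" for lam
proof
  show "bilinear (br3 lam)"
    unfolding bilinear_def linear_iff br3_def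
    by (simp add: inner_add_left inner_scaleR_left algebra_simps)
  show "br3 lam A B = - br3 lam B A" for A B
    unfolding br3_def by (simp add: algebra_simps flip: scaleR_minus_left)
  show "br3 lam (br3 lam A B) C = 0" for A B C
    by (simp add: br3_def inner_e_e)
  show "(\<Sum>i\<in>{1..5}. br3 lam Z (e i) \<bullet> e i) = 0" for Z
    by (simp add: br3_def inner_e_e eval_nat_numeral)
qed

lemma orth_compl_commutators_br1:
  assumes "lam \<noteq> 0"
  shows "X \<in> orth_compl (commutators (br1 lam mu)) \<longleftrightarrow> X \<bullet> e 5 = 0"
proof
  assume "X \<in> orth_compl (commutators (br1 lam mu))"
  then have "X \<bullet> br1 lam mu (e 1) (e 2) = 0"
    by (auto simp: orth_compl_def commutators_def)
  then show "X \<bullet> e 5 = 0"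
    using assms by (simp add: br1_def inner_e_e)
qed (auto simp: orth_compl_def commutators_def br1_def)

lemma orth_compl_commutators_br2:
  assumes "lam \<noteq> 0" "mu \<noteq> 0"
  shows "X \<in> orth_compl (commutators (br2 lam mu)) \<longleftrightarrow> X \<bullet> e 4 = 0 \<and> X \<bullet> e 5 = 0"
proof
  assume "X \<in> orth_compl (commutators (br2 lam mu))"
  then have "X \<bullet> br2 lam mu (e 1) (e 2) = 0" "X \<bullet> br2 lam mu (e 1) (e 3) = 0"
    by (auto simp: orth_compl_def commutators_def)
  then show "X \<bullet> e 4 = 0 \<and> X \<bullet> e 5 = 0"
    using assms by (simp add: br2_def inner_e_e)
qed (auto simp: orth_compl_def commutators_def br2_def inner_add_right)

lemma orth_compl_commutators_br3:
  assumes "lam \<noteq> 0"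
  shows "X \<in> orth_compl (commutators (br3 lam)) \<longleftrightarrow> X \<bullet> e 3 = 0"
proof
  assume "X \<in> orth_compl (commutators (br3 lam))"
  then have "X \<bullet> br3 lam (e 1) (e 2) = 0"
    by (auto simp: orth_compl_def commutators_def)
  then show "X \<bullet> e 3 = 0"
    using assms by (simp add: br3_def inner_e_e)
qed (auto simp: orth_compl_def commutators_def br3_def)

lemma orth_compl_center_br1:
  assumes "lam \<noteq> 0" "mu \<noteq> 0"
  shows "X \<in> orth_compl (center (br1 lam mu)) \<longleftrightarrow> X \<bullet> e 5 = 0"
proof
  assume "X \<in> orth_compl (center (br1 lam mu))"
  moreover have "e 5 \<in> center (br1 lam mu)"
    by (simp add: center_def br1_def inner_e_e)
  ultimately show "X \<bullet> e 5 = 0"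
    by (simp add: orth_compl_def)
next
  assume X5: "X \<bullet> e 5 = 0"
  have "X \<bullet> Z = 0" if "Z \<in> center (br1 lam mu)" for Z
  proof -
    from that have "\<And>Y. br1 lam mu Z Y = 0"
      by (simp add: center_def)
    from this[of "e 2"] this[of "e 1"] this[of "e 4"] this[of "e 3"]
    have "Z \<bullet> e 1 = 0" "Z \<bullet> e 2 = 0" "Z \<bullet> e 3 = 0" "Z \<bullet> e 4 = 0"
      using assms by (simp_all add: br1_def inner_e_e e_nonzero)
    then show ?thesis
      using X5 unfolding inner_lalg_expansion[of X Z] sum_1_5 by simp
  qed
  then show "X \<in> orth_compl (center (br1 lam mu))"
    by (simp add: orth_compl_def)
qed

lemma orth_compl_center_br2:
  assumes "lam \<noteq> 0" "mu \<noteq> 0"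
  shows "X \<in> orth_compl (center (br2 lam mu)) \<longleftrightarrow> X \<bullet> e 4 = 0 \<and> X \<bullet> e 5 = 0"
proof
  assume "X \<in> orth_compl (center (br2 lam mu))"
  moreover have "e 4 \<in> center (br2 lam mu)" "e 5 \<in> center (br2 lam mu)"
    by (simp_all add: center_def br2_def inner_e_e)
  ultimately show "X \<bullet> e 4 = 0 \<and> X \<bullet> e 5 = 0"
    by (simp add: orth_compl_def)
next
  assume X45: "X \<bullet> e 4 = 0 \<and> X \<bullet> e 5 = 0"
  have "X \<bullet> Z = 0" if "Z \<in> center (br2 lam mu)" for Z
  proof -
    from that have "\<And>Y. br2 lam mu Z Y \<bullet> e 4 = 0" "\<And>Y. br2 lam mu Z Y \<bullet> e 5 = 0"
      by (simp_all add: center_def)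
    from this(1)[of "e 2"] this(1)[of "e 1"] this(2)[of "e 1"]
    have "Z \<bullet> e 1 = 0" "Z \<bullet> e 2 = 0" "Z \<bullet> e 3 = 0"
      using assms by (simp_all add: br2_def inner_e_e inner_add_left inner_diff_left)
    then show ?thesis
      using X45 unfolding inner_lalg_expansion[of X Z] sum_1_5 by simp
  qed
  then show "X \<in> orth_compl (center (br2 lam mu))"
    by (simp add: orth_compl_def)
qed

theorem mainTheorem5:
  fixes lam mu :: real and X :: lalg
  shows "(lam \<ge> mu \<and> mu > 0 \<longrightarrow>
            (harmonic (br1 lam mu) X \<longleftrightarrow> X \<in> orth_compl (center (br1 lam mu))))
       \<and> (lam \<ge> mu \<and> mu > 0 \<longrightarrow>
            (harmonic (br2 lam mu) X \<longleftrightarrow> X \<in> orth_compl (center (br2 lam mu))))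
       \<and> (lam > 0 \<longrightarrow> (harmonic (br3 lam) X \<longleftrightarrow> X \<bullet> e 3 = 0))"
proof (intro conjI impI)
  assume "mu \<le> lam \<and> 0 < mu"
  then have "lam \<noteq> 0" "mu \<noteq> 0"
    by auto
  then show "harmonic (br1 lam mu) X \<longleftrightarrow> X \<in> orth_compl (center (br1 lam mu))"
    by (simp add: br1.harmonic_iff_orth_compl_commutators orth_compl_commutators_br1
        orth_compl_center_br1)
next
  assume "mu \<le> lam \<and> 0 < mu"
  then have "lam \<noteq> 0" "mu \<noteq> 0"
    by auto
  then show "harmonic (br2 lam mu) X \<longleftrightarrow> X \<in> orth_compl (center (br2 lam mu))"
    by (simp add: br2.harmonic_iff_orth_compl_commutators orth_compl_commutators_br2
        orth_compl_center_br2)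
next
  assume "0 < lam"
  then have "lam \<noteq> 0"
    by auto
  then show "harmonic (br3 lam) X \<longleftrightarrow> X \<bullet> e 3 = 0"
    by (simp add: br3.harmonic_iff_orth_compl_commutators orth_compl_commutators_br3)
qed

end
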